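(* Let $\Phi$ be a Markov Logic Network and $n,m$ positive integers. Then $$M_{min}\, C_{n,m}\, Z(n)\,Z(m) \leq Z(n+m) \leq Z(n)\,Z(m)\,C_{n,m}\, M_{max},$$ where $M_{max} = \prod_{k \in [d]} (w^{max}_{k})^{ \binom{n+m}{k} - \binom{n}{k} - \binom{m}{k}}$ and $M_{min} = \prod_{k \in [d]} (w^{min}_{k})^{ \binom{n+m}{k} - \binom{n}{k} - \binom{m}{k}}$, and $C_{n,m}$ is the number of ways in which an interpretation on $[n]$ and an interpretation on $\{n+1,\dots,n+m\}$ can be extended to an interpretation on $[n+m]$.
   Context: Fix a finite function-free relational first-order signature $\mathcal{R}$. For a positive integer $N$ write $[N]=\{1,\dots,N\}$. For a finite set $D$ of constants, a ground atom over $D$ is $R(a_1,\dots,a_r)$ with $R\in\mathcal{R}$ of arity $r$ and $a_1,\dots,a_r\in D$. An interpretation on $D$ is a map assigning true/false to every ground atom over $D$; $\Omega^{(N)}$ is the set of interpretations on $[N]$. For an interpretation $\omega$ on $D$ and $I\subseteq D$, $\omega\downarrow I$ is the restriction of $\omega$ to the ground atoms all of whose arguments lie in $I$. The number $C_{n,m}$ of interpretations $\omega$ on $[n+m]$ with $\omega\downarrow[n]=\omega'$ and $\omega\downarrow\{n+1,\dots,n+m\}=\omega''$ is the same for every pair $(\omega',\omega'')$ (it equals $2$ to the number of ground atoms over $[n+m]$ having arguments in both $[n]$ and $\{n+1,\dots,n+m\}$). A Markov Logic Network (MLN) $\Phi$ is a finite set of pairs $(\phi_i,a_i)$, where $\phi_i$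 is a function-free, quantifier-free first-order formula over $\mathcal{R}$ and $a_i\in\mathbb{R}$. The arity of $\phi_i$ is the number of distinct variables in it; $\Phi_k$ is the set of pairs whose formula has arity $k$; $d$ is the largest arity. Convention: a formula with $k$ variables is grounded only by substituting $k$ pairwise distinct constants for its variables; for an interpretation $\omega$ on a finite set $D$, $N(\phi,\omega)$ is the number of injective assignments of the variables of $\phi$ to elements of $D$ under which $\phi$ is true in $\omega$. The weight of an interpretation $\omega$ is $w(\omega)=\exp\bigl(\sum_{(\phi_i,a_i)\in\Phi}a_iN(\phi_i,\omega)\bigr)$ and its $k$-weight is $w_k(\omega)=\exp\bigl(\sum_{(\phi_i,a_i)\in\Phi_k}a_iN(\phi_i,\omega)\bigr)$. $w_k^{max}$ and $w_k^{min}$ denote the maximum and minimum of $w_k(\omega')$ over all interpretations $\omega'$ on a $k$-element domain. The partition function is $Z(N)=\sum_{\omega\in\Omega^{(N)}}w(\omega)$. Binomial coefficients $\binom{a}{k}$ with $k>a$ are $0$. *)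

theory Defs
  imports Complex_Main "HOL-Library.FuncSet"
begin

datatype 'r fo =
    Tru
  | Atom 'r "nat list"
  | Eq nat nat
  | Neg "'r fo"
  | Conj "'r fo" "'r fo"
  | Disj "'r fo" "'r fo"

fun fvars :: "'r fo \<Rightarrow> nat set" where
  "fvars Tru = {}"
| "fvars (Atom R xs) = set xs"
| "fvars (Eq x y) = {x, y}"
| "fvars (Neg f) = fvars f"
| "fvars (Conj f g) = fvars f \<union> fvars g"
| "fvars (Disj f g) = fvars f \<union> fvars g"

fun wf_fo :: "'r set \<Rightarrow> ('r \<Rightarrow> nat) \<Rightarrow> 'r fo \<Rightarrow> bool" where
  "wf_fo Rs ar Tru = True"
| "wf_fo Rs ar (Atom R xs) = (R \<in> Rs \<and> length xs = ar R)"
| "wf_fo Rs ar (Eq x y) = True"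
| "wf_fo Rs ar (Neg f) = wf_fo Rs ar f"
| "wf_fo Rs ar (Conj f g) = (wf_fo Rs ar f \<and> wf_fo Rs ar g)"
| "wf_fo Rs ar (Disj f g) = (wf_fo Rs ar f \<and> wf_fo Rs ar g)"

definition farity :: "'r fo \<Rightarrow> nat" where
  "farity f = card (fvars f)"

definition ground_atoms :: "'r set \<Rightarrow> ('r \<Rightarrow> nat) \<Rightarrow> nat set \<Rightarrow> ('r \<times> nat list) set" where
  "ground_atoms Rs ar D = {(R, xs). R \<in> Rs \<and> length xs = ar R \<and> set xs \<subseteq> D}"

text \<open>An interpretation on D is represented by the set of its true ground atoms over D.\<close>
definition interps :: "'r set \<Rightarrow> ('r \<Rightarrow> nat) \<Rightarrow> nat set \<Rightarrow> ('r \<times> nat list) set set" where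
  "interps Rs ar D = Pow (ground_atoms Rs ar D)"

definition restr :: "'r set \<Rightarrow> ('r \<Rightarrow> nat) \<Rightarrow> ('r \<times> nat list) set \<Rightarrow> nat set \<Rightarrow> ('r \<times> nat list) set" where
  "restr Rs ar \<omega> I = \<omega> \<inter> ground_atoms Rs ar I"

fun holds :: "('r \<times> nat list) set \<Rightarrow> (nat \<Rightarrow> nat) \<Rightarrow> 'r fo \<Rightarrow> bool" where
  "holds \<omega> \<sigma> Tru = True"
| "holds \<omega> \<sigma> (Atom R xs) = ((R, map \<sigma> xs) \<in> \<omega>)"
| "holds \<omega> \<sigma> (Eq x y) = (\<sigma> x = \<sigma> y)"
| "holds \<omega> \<sigma> (Neg f) = (\<not> holds \<omega> \<sigma> f)"
| "holds \<omega> \<sigma> (Conj f g) = (holds \<omega> \<sigma> f \<and> holds \<omega> \<sigma> g)"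
| "holds \<omega> \<sigma> (Disj f g) = (holds \<omega> \<sigma> f \<or> holds \<omega> \<sigma> g)"

definition ncount :: "nat set \<Rightarrow> 'r fo \<Rightarrow> ('r \<times> nat list) set \<Rightarrow> nat" where
  "ncount D f \<omega> = card {\<sigma> \<in> fvars f \<rightarrow>\<^sub>E D. inj_on \<sigma> (fvars f) \<and> holds \<omega> \<sigma> f}"

definition weight :: "('r fo \<times> real) set \<Rightarrow> nat set \<Rightarrow> ('r \<times> nat list) set \<Rightarrow> real" where
  "weight \<Phi> D \<omega> = exp (\<Sum>p\<in>\<Phi>. snd p * real (ncount D (fst p) \<omega>))"

definition Phi_k :: "('r fo \<times> real) set \<Rightarrow> nat \<Rightarrow> ('r fo \<times> real) set" where
  "Phi_k \<Phi> k = {p \<in> \<Phi>. farity (fst p) = k}"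

definition kweight :: "('r fo \<times> real) set \<Rightarrow> nat \<Rightarrow> nat set \<Rightarrow> ('r \<times> nat list) set \<Rightarrow> real" where
  "kweight \<Phi> k D \<omega> = weight (Phi_k \<Phi> k) D \<omega>"

definition wmax :: "'r set \<Rightarrow> ('r \<Rightarrow> nat) \<Rightarrow> ('r fo \<times> real) set \<Rightarrow> nat \<Rightarrow> real" where
  "wmax Rs ar \<Phi> k = Max (kweight \<Phi> k {1..k} ` interps Rs ar {1..k})"

definition wmin :: "'r set \<Rightarrow> ('r \<Rightarrow> nat) \<Rightarrow> ('r fo \<times> real) set \<Rightarrow> nat \<Rightarrow> real" where
  "wmin Rs ar \<Phi> k = Min (kweight \<Phi> k {1..k} ` interps Rs ar {1..k})"

definition max_arity :: "('r fo \<times> real) set \<Rightarrow> nat" where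
  "max_arity \<Phi> = Max ({0} \<union> (\<lambda>p. farity (fst p)) ` \<Phi>)"

definition Zpart :: "'r set \<Rightarrow> ('r \<Rightarrow> nat) \<Rightarrow> ('r fo \<times> real) set \<Rightarrow> nat \<Rightarrow> real" where
  "Zpart Rs ar \<Phi> N = (\<Sum>\<omega>\<in>interps Rs ar {1..N}. weight \<Phi> {1..N} \<omega>)"

text \<open>C_{n,m}: number of interpretations on [n+m] extending a given pair of interpretations on
  [n] and on {n+1..n+m} (independent of the pair; we take the pair of empty interpretations).\<close>
definition Cnm :: "'r set \<Rightarrow> ('r \<Rightarrow> nat) \<Rightarrow> nat \<Rightarrow> nat \<Rightarrow> nat" where
  "Cnm Rs ar n m = card {\<omega> \<in> interps Rs ar {1..n+m}.
      restr Rs ar \<omega> {1..n} = {} \<and> restr Rs ar \<omega> {n+1..n+m} = {}}"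

definition Mmax :: "'r set \<Rightarrow> ('r \<Rightarrow> nat) \<Rightarrow> ('r fo \<times> real) set \<Rightarrow> nat \<Rightarrow> nat \<Rightarrow> real" where
  "Mmax Rs ar \<Phi> n m = (\<Prod>k\<in>{1..max_arity \<Phi>}.
      wmax Rs ar \<Phi> k ^ ((n+m choose k) - (n choose k) - (m choose k)))"

definition Mmin :: "'r set \<Rightarrow> ('r \<Rightarrow> nat) \<Rightarrow> ('r fo \<times> real) set \<Rightarrow> nat \<Rightarrow> nat \<Rightarrow> real" where
  "Mmin Rs ar \<Phi> n m = (\<Prod>k\<in>{1..max_arity \<Phi>}.
      wmin Rs ar \<Phi> k ^ ((n+m choose k) - (n choose k) - (m choose k)))"

end

theory Submission
  imports Defs
begin

text \<open>
  Grouped by their range, a \<open>k\<close>-subset \<open>S\<close> of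
  the domain with \<open>k\<close> the arity of \<open>\<phi>\<close>, the groundings with range \<open>S\<close> are exactly those counted on
  the domain \<open>S\<close> for the restriction of \<open>\<omega>\<close> to \<open>S\<close>. Hence \<open>w(\<omega>)\<close> is the product, over all
  subsets \<open>S\<close> of the domain, of the local weights \<open>w\<^sub>k\<close> of the restrictions of \<open>\<omega>\<close> to \<open>S\<close>, \<open>k = |S|\<close>.

  On the domain \<open>[n] \<union> {n+1..n+m}\<close> the subsets of either block give the weights of the two
  restrictions of \<open>\<omega>\<close>. A local weight is invariant under renaming the constants, so each
  crossing subset of size \<open>k\<close> contributes a factor between \<open>w\<^sub>k\<^sup>m\<^sup>i\<^sup>n\<close> and \<open>w\<^sub>k\<^sup>m\<^sup>a\<^sup>x\<close> (exactly 1 if \<open>k > d\<close>), and there are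
  \<open>C(n+m,k) - C(n,k) - C(m,k)\<close> of them. Summing over \<open>\<omega>\<close>, each pair of interpretations of the two
  blocks has exactly \<open>C\<^sub>n\<^sub>,\<^sub>m\<close> common extensions, and by renaming the partition function of
  \<open>{n+1..n+m}\<close> is \<open>Z(m)\<close>.
\<close>

lemma finite_fvars: "finite (fvars f)"
  by (induction f) auto

lemma holds_cong: "(\<And>x. x \<in> fvars f \<Longrightarrow> \<sigma> x = \<tau> x) \<Longrightarrow> holds \<omega> \<sigma> f = holds \<omega> \<tau> f"
  by (induction f) (auto cong: map_cong)

lemma restr_restr: "S \<subseteq> A \<Longrightarrow> restr Rs ar (restr Rs ar \<omega> A) S = restr Rs ar \<omega> S"
  by (auto simp: restr_def ground_atoms_def)

lemma restr_subset_ground_atoms: "restr Rs ar \<omega> A \<subseteq> ground_atoms Rs ar A"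
  by (simp add: restr_def)

lemma finite_ground_atoms:
  assumes "finite Rs" and "finite D"
  shows "finite (ground_atoms Rs ar D)"
proof (rule finite_subset)
  show "ground_atoms Rs ar D \<subseteq> Sigma Rs (\<lambda>R. {xs. set xs \<subseteq> D \<and> length xs = ar R})"
    by (auto simp: ground_atoms_def)
  show "finite (Sigma Rs (\<lambda>R. {xs. set xs \<subseteq> D \<and> length xs = ar R}))"
    using assms by (intro finite_SigmaI finite_lists_length_eq)
qed

lemma finite_interps: "finite Rs \<Longrightarrow> finite D \<Longrightarrow> finite (interps Rs ar D)"
  by (simp add: interps_def finite_ground_atoms)

lemma kweight_pos: "0 < kweight \<Phi> k D \<nu>"
  by (simp add: kweight_def weight_def)

definition groundings :: "nat set \<Rightarrow> 'r fo \<Rightarrow> ('r \<times> nat list) set \<Rightarrow> (nat \<Rightarrow> nat) set" where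
  "groundings D f \<omega> = {\<sigma> \<in> fvars f \<rightarrow>\<^sub>E D. inj_on \<sigma> (fvars f) \<and> holds \<omega> \<sigma> f}"

lemma ncount_eq_card_groundings: "ncount D f \<omega> = card (groundings D f \<omega>)"
  by (simp add: ncount_def groundings_def)

section \<open>Renaming the domain\<close>

definition rename_atom :: "(nat \<Rightarrow> nat) \<Rightarrow> 'r \<times> nat list \<Rightarrow> 'r \<times> nat list" where
  "rename_atom h = (\<lambda>(R, xs). (R, map h xs))"

lemma inj_on_rename_atom:
  assumes "inj_on h D"
  shows "inj_on (rename_atom h) {(R, xs). set xs \<subseteq> D}"
proof (rule inj_onI, clarsimp simp: rename_atom_def)
  fix xs ys assume "set xs \<subseteq> D" "set ys \<subseteq> D" "map h xs = map h ys"
  then show "xs = ys"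
    using inj_on_map_eq_map inj_on_subset[OF assms] by (metis le_sup_iff)
qed

lemma rename_atom_ground_atoms:
  "rename_atom h ` ground_atoms Rs ar D = ground_atoms Rs ar (h ` D)"
proof -
  have "ground_atoms Rs ar D = Sigma Rs (\<lambda>R. {xs \<in> lists D. length xs = ar R})" for D
    by (auto simp: ground_atoms_def)
  then show ?thesis
    by (auto simp: rename_atom_def lists_image image_iff)
qed

lemma bij_betw_rename_interps:
  assumes "inj_on h D"
  shows "bij_betw (image (rename_atom h)) (interps Rs ar D) (interps Rs ar (h ` D))"
proof -
  have "inj_on (rename_atom h) (ground_atoms Rs ar D)"
    by (rule inj_on_subset[OF inj_on_rename_atom[OF assms]]) (auto simp: ground_atoms_def)
  then show ?thesis
    unfolding interps_def rename_atom_ground_atoms[symmetric]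
    by (intro bij_betw_image_Pow) (simp add: bij_betw_def)
qed

lemma holds_rename_atom:
  assumes h: "inj_on h D" and \<omega>: "\<omega> \<subseteq> ground_atoms Rs ar D" and \<sigma>: "\<sigma> ` fvars f \<subseteq> D"
  shows "holds (rename_atom h ` \<omega>) (h \<circ> \<sigma>) f = holds \<omega> \<sigma> f"
  using \<sigma>
proof (induction f)
  case (Atom R xs)
  have "\<omega> \<subseteq> {(R, xs). set xs \<subseteq> D}" using \<omega> by (auto simp: ground_atoms_def)
  moreover have "(R, map \<sigma> xs) \<in> {(R, xs). set xs \<subseteq> D}" using Atom by auto
  ultimately have "rename_atom h (R, map \<sigma> xs) \<in> rename_atom h ` \<omega> \<longleftrightarrow> (R, map \<sigma> xs) \<in> \<omega>"
    by (intro inj_on_image_mem_iff[OF inj_on_rename_atom[OF h]])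
  then show ?case by (simp add: rename_atom_def comp_def)
next
  case (Eq x y)
  then show ?case using h by (auto dest: inj_onD)
qed auto

lemma bij_betw_compose_PiE:
  assumes "inj_on h D"
  shows "bij_betw (\<lambda>\<sigma>. restrict (h \<circ> \<sigma>) V) (V \<rightarrow>\<^sub>E D) (V \<rightarrow>\<^sub>E h ` D)"
proof (rule bij_betw_byWitness[where f' = "\<lambda>\<tau>. restrict (inv_into D h \<circ> \<tau>) V"])
  show "\<forall>\<sigma>\<in>V \<rightarrow>\<^sub>E D. restrict (inv_into D h \<circ> restrict (h \<circ> \<sigma>) V) V = \<sigma>"
  proof (intro ballI ext)
    fix \<sigma> x assume \<sigma>: "\<sigma> \<in> V \<rightarrow>\<^sub>E D"
    show "restrict (inv_into D h \<circ> restrict (h \<circ> \<sigma>) V) V x = \<sigma> x"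
      using assms PiE_mem[OF \<sigma>] PiE_arb[OF \<sigma>] by (cases "x \<in> V") (simp_all add: inv_into_f_f)
  qed
  show "\<forall>\<tau>\<in>V \<rightarrow>\<^sub>E h ` D. restrict (h \<circ> restrict (inv_into D h \<circ> \<tau>) V) V = \<tau>"
  proof (intro ballI ext)
    fix \<tau> x assume \<tau>: "\<tau> \<in> V \<rightarrow>\<^sub>E h ` D"
    show "restrict (h \<circ> restrict (inv_into D h \<circ> \<tau>) V) V x = \<tau> x"
      using PiE_mem[OF \<tau>] PiE_arb[OF \<tau>] by (cases "x \<in> V") (simp_all add: f_inv_into_f)
  qed
  show "(\<lambda>\<sigma>. restrict (h \<circ> \<sigma>) V) ` (V \<rightarrow>\<^sub>E D) \<subseteq> V \<rightarrow>\<^sub>E h ` D"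
    by (auto dest: PiE_mem)
  show "(\<lambda>\<tau>. restrict (inv_into D h \<circ> \<tau>) V) ` (V \<rightarrow>\<^sub>E h ` D) \<subseteq> V \<rightarrow>\<^sub>E D"
    by (auto dest: PiE_mem intro!: inv_into_into)
qed

lemma ncount_rename_atom:
  assumes h: "inj_on h D" and \<omega>: "\<omega> \<subseteq> ground_atoms Rs ar D"
  shows "ncount (h ` D) f (rename_atom h ` \<omega>) = ncount D f \<omega>"
proof -
  let ?V = "fvars f"
  have iff: "inj_on (restrict (h \<circ> \<sigma>) ?V) ?V \<and> holds (rename_atom h ` \<omega>) (restrict (h \<circ> \<sigma>) ?V) f
      \<longleftrightarrow> inj_on \<sigma> ?V \<and> holds \<omega> \<sigma> f" if "\<sigma> \<in> ?V \<rightarrow>\<^sub>E D" for \<sigma>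
  proof -
    have sub: "\<sigma> ` ?V \<subseteq> D" using that by (auto dest: PiE_mem)
    have "holds (rename_atom h ` \<omega>) (restrict (h \<circ> \<sigma>) ?V) f = holds (rename_atom h ` \<omega>) (h \<circ> \<sigma>) f"
      by (rule holds_cong) auto
    also have "\<dots> = holds \<omega> \<sigma> f"
      by (rule holds_rename_atom[OF h \<omega> sub])
    finally have holds_iff: "holds (rename_atom h ` \<omega>) (restrict (h \<circ> \<sigma>) ?V) f = holds \<omega> \<sigma> f" .
    have "inj_on h (\<sigma> ` ?V)" by (rule inj_on_subset[OF h sub])
    then have "inj_on (restrict (h \<circ> \<sigma>) ?V) ?V \<longleftrightarrow> inj_on \<sigma> ?V"
      unfolding inj_on_restrict_eq using comp_inj_on inj_on_imageI2 by blast
    with holds_iff show ?thesis by simp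
  qed
  have "bij_betw (\<lambda>\<sigma>. restrict (h \<circ> \<sigma>) ?V) (groundings D f \<omega>) (groundings (h ` D) f (rename_atom h ` \<omega>))"
    unfolding groundings_def by (rule bij_betw_Collect[OF bij_betw_compose_PiE[OF h]]) (rule iff)
  then show ?thesis
    unfolding ncount_eq_card_groundings by (rule bij_betw_same_card[symmetric])
qed

lemma weight_rename_atom:
  assumes "inj_on h D" and "\<omega> \<subseteq> ground_atoms Rs ar D"
  shows "weight \<Phi> (h ` D) (rename_atom h ` \<omega>) = weight \<Phi> D \<omega>"
  unfolding weight_def using ncount_rename_atom[OF assms] by simp

definition partition_fun :: "'r set \<Rightarrow> ('r \<Rightarrow> nat) \<Rightarrow> ('r fo \<times> real) set \<Rightarrow> nat set \<Rightarrow> real" where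
  "partition_fun Rs ar \<Phi> D = (\<Sum>\<omega>\<in>interps Rs ar D. weight \<Phi> D \<omega>)"

lemma partition_fun_rename:
  assumes h: "inj_on h D"
  shows "partition_fun Rs ar \<Phi> (h ` D) = partition_fun Rs ar \<Phi> D"
proof -
  have "partition_fun Rs ar \<Phi> (h ` D) = (\<Sum>\<omega>\<in>interps Rs ar D. weight \<Phi> (h ` D) (rename_atom h ` \<omega>))"
    unfolding partition_fun_def by (rule sum.reindex_bij_betw[OF bij_betw_rename_interps[OF h], symmetric])
  also have "\<dots> = partition_fun Rs ar \<Phi> D"
    unfolding partition_fun_def
    by (rule sum.cong[OF refl]) (simp add: weight_rename_atom[OF h] interps_def)
  finally show ?thesis .
qed

lemma kweight_bounds:
  assumes Rs: "finite Rs" and S: "finite S" and \<nu>: "\<nu> \<in> interps Rs ar S"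
  shows "wmin Rs ar \<Phi> (card S) \<le> kweight \<Phi> (card S) S \<nu> \<and> kweight \<Phi> (card S) S \<nu> \<le> wmax Rs ar \<Phi> (card S)"
proof -
  let ?k = "card S"
  obtain h where "bij_betw h S {1..?k}"
    using finite_same_card_bij[OF S, of "{1..?k}"] by auto
  then have h: "inj_on h S" and hS: "h ` S = {1..?k}" by (auto simp: bij_betw_def)
  have "kweight \<Phi> ?k S \<nu> = kweight \<Phi> ?k {1..?k} (rename_atom h ` \<nu>)"
    using weight_rename_atom[OF h, of \<nu> Rs ar "Phi_k \<Phi> ?k"] \<nu> hS by (simp add: kweight_def interps_def)
  moreover have "rename_atom h ` \<nu> \<in> interps Rs ar {1..?k}"
    using bij_betw_apply[OF bij_betw_rename_interps[OF h] \<nu>] hS by simp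
  moreover have "finite (kweight \<Phi> ?k {1..?k} ` interps Rs ar {1..?k})"
    using Rs by (simp add: finite_interps)
  ultimately show ?thesis
    unfolding wmin_def wmax_def by (auto intro: Min_le Max_ge)
qed

lemma wmin_pos:
  assumes "finite Rs"
  shows "0 < wmin Rs ar \<Phi> k"
proof -
  have "finite (kweight \<Phi> k {1..k} ` interps Rs ar {1..k})"
    using assms by (simp add: finite_interps)
  moreover have "{} \<in> interps Rs ar {1..k}" by (simp add: interps_def)
  ultimately have "wmin Rs ar \<Phi> k \<in> kweight \<Phi> k {1..k} ` interps Rs ar {1..k}"
    unfolding wmin_def by (intro Min_in) auto
  then show ?thesis using kweight_pos by auto
qed

section \<open>Locality of the weight\<close>

lemma holds_restr:
  assumes "\<omega> \<subseteq> ground_atoms Rs ar X" and "\<sigma> ` fvars f \<subseteq> S"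
  shows "holds (restr Rs ar \<omega> S) \<sigma> f = holds \<omega> \<sigma> f"
  using assms(2)
proof (induction f)
  case (Atom R xs)
  then show ?case using assms(1) by (auto simp: restr_def ground_atoms_def)
qed auto

lemma groundings_with_range:
  assumes D: "finite D" and \<omega>: "\<omega> \<subseteq> ground_atoms Rs ar X"
    and S: "S \<subseteq> D" "card S = farity f"
  shows "{\<sigma> \<in> groundings D f \<omega>. \<sigma> ` fvars f = S} = groundings S f (restr Rs ar \<omega> S)"
proof (intro set_eqI iffI)
  fix \<sigma> assume \<sigma>: "\<sigma> \<in> {\<sigma> \<in> groundings D f \<omega>. \<sigma> ` fvars f = S}"
  then have "\<sigma> \<in> fvars f \<rightarrow>\<^sub>E S" by (simp add: groundings_def PiE_iff) blast
  moreover have "holds (restr Rs ar \<omega> S) \<sigma> f"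
    using \<sigma> holds_restr[OF \<omega>, of \<sigma> f S] by (simp add: groundings_def)
  ultimately show "\<sigma> \<in> groundings S f (restr Rs ar \<omega> S)"
    using \<sigma> by (simp add: groundings_def)
next
  fix \<sigma> assume \<sigma>: "\<sigma> \<in> groundings S f (restr Rs ar \<omega> S)"
  then have sub: "\<sigma> ` fvars f \<subseteq> S" by (simp add: groundings_def PiE_iff image_subset_iff)
  have "\<sigma> ` fvars f = S"
  proof (rule card_subset_eq[OF _ sub])
    show "finite S" using S D by (auto intro: finite_subset)
    show "card (\<sigma> ` fvars f) = card S" using S \<sigma> by (simp add: groundings_def card_image farity_def)
  qed
  moreover have "\<sigma> \<in> fvars f \<rightarrow>\<^sub>E D" using \<sigma> S by (auto simp: groundings_def PiE_iff)
  ultimately show "\<sigma> \<in> {\<sigma> \<in> groundings D f \<omega>. \<sigma> ` fvars f = S}"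
    using \<sigma> holds_restr[OF \<omega> sub] by (simp add: groundings_def)
qed

lemma ncount_eq_sum_subsets:
  assumes D: "finite D" and \<omega>: "\<omega> \<subseteq> ground_atoms Rs ar X"
  shows "ncount D f \<omega> = (\<Sum>S\<in>{S \<in> Pow D. card S = farity f}. ncount S f (restr Rs ar \<omega> S))"
proof -
  let ?K = "{S \<in> Pow D. card S = farity f}"
  have "finite (groundings D f \<omega>)"
    using D finite_fvars
    by (auto simp: groundings_def intro: finite_subset[OF _ finite_PiE[of "fvars f" "\<lambda>_. D"]])
  moreover have "finite ?K" using D by simp
  moreover have "(\<lambda>\<sigma>. \<sigma> ` fvars f) ` groundings D f \<omega> \<subseteq> ?K"
    by (auto simp: groundings_def card_image farity_def)
  ultimately have "ncount D f \<omega> = (\<Sum>S\<in>?K. card {\<sigma> \<in> groundings D f \<omega>. \<sigma> ` fvars f = S})"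
    unfolding ncount_eq_card_groundings card_eq_sum by (rule sum.group[symmetric])
  also have "\<dots> = (\<Sum>S\<in>?K. ncount S f (restr Rs ar \<omega> S))"
    unfolding ncount_eq_card_groundings
    by (rule sum.cong[OF refl], rule arg_cong[of _ _ card], rule groundings_with_range[OF D \<omega>]) auto
  finally show ?thesis .
qed

lemma weight_eq_prod_subsets:
  assumes \<Phi>: "finite \<Phi>" and D: "finite D" and \<omega>: "\<omega> \<subseteq> ground_atoms Rs ar X"
  shows "weight \<Phi> D \<omega> = (\<Prod>S\<in>Pow D. kweight \<Phi> (card S) S (restr Rs ar \<omega> S))"
proof -
  let ?N = "\<lambda>p S. snd p * real (ncount S (fst p) (restr Rs ar \<omega> S))"
  have "(\<Sum>p\<in>\<Phi>. snd p * real (ncount D (fst p) \<omega>))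
      = (\<Sum>p\<in>\<Phi>. \<Sum>S\<in>{S \<in> Pow D. card S = farity (fst p)}. ?N p S)"
    by (simp only: ncount_eq_sum_subsets[OF D \<omega>] of_nat_sum sum_distrib_left)
  also have "\<dots> = (\<Sum>S\<in>Pow D. \<Sum>p\<in>{p \<in> \<Phi>. card S = farity (fst p)}. ?N p S)"
    using \<Phi> D by (intro sum.swap_restrict) simp_all
  also have "\<dots> = (\<Sum>S\<in>Pow D. \<Sum>p\<in>Phi_k \<Phi> (card S). ?N p S)"
    by (simp add: Phi_k_def eq_commute)
  finally show ?thesis
    using D by (simp add: weight_def kweight_def exp_sum)
qed

section \<open>Subsets crossing a partition of the domain\<close>

definition crossing_subsets :: "nat set \<Rightarrow> nat set \<Rightarrow> nat set set" where
  "crossing_subsets A B = Pow (A \<union> B) - Pow A - Pow B"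

lemma kweight_arity_zero:
  assumes "\<forall>p\<in>\<Phi>. farity (fst p) \<ge> 1"
  shows "kweight \<Phi> 0 S \<nu> = 1"
proof -
  have "Phi_k \<Phi> 0 = {}" using assms by (auto simp: Phi_k_def)
  then show ?thesis by (simp add: kweight_def weight_def)
qed

lemma weight_Un_disjoint:
  assumes \<Phi>: "finite \<Phi>" and arity: "\<forall>p\<in>\<Phi>. farity (fst p) \<ge> 1"
    and A: "finite A" and B: "finite B" and AB: "A \<inter> B = {}"
    and \<omega>: "\<omega> \<subseteq> ground_atoms Rs ar (A \<union> B)"
  shows "weight \<Phi> (A \<union> B) \<omega> = weight \<Phi> A (restr Rs ar \<omega> A) * weight \<Phi> B (restr Rs ar \<omega> B)
     * (\<Prod>S\<in>crossing_subsets A B. kweight \<Phi> (card S) S (restr Rs ar \<omega> S))"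
proof -
  let ?w = "\<lambda>S. kweight \<Phi> (card S) S (restr Rs ar \<omega> S)"
  have weight_restr: "weight \<Phi> C (restr Rs ar \<omega> C) = prod ?w (Pow C)" if "finite C" for C
    using weight_eq_prod_subsets[OF \<Phi> that restr_subset_ground_atoms] by (simp add: restr_restr)
  have "Pow A \<inter> Pow B = {{}}" using AB by auto
  then have "prod ?w (Pow A \<union> Pow B) = prod ?w (Pow A) * prod ?w (Pow B)"
    using prod.union_inter[of "Pow A" "Pow B" ?w] A B kweight_arity_zero[OF arity] by simp
  moreover have "prod ?w (Pow (A \<union> B)) = prod ?w (Pow A \<union> Pow B) * prod ?w (crossing_subsets A B)"
  proof -
    have "Pow (A \<union> B) = (Pow A \<union> Pow B) \<union> crossing_subsets A B"
      by (auto simp: crossing_subsets_def)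
    then have "prod ?w (Pow (A \<union> B)) = prod ?w ((Pow A \<union> Pow B) \<union> crossing_subsets A B)"
      by (simp only:)
    also have "\<dots> = prod ?w (Pow A \<union> Pow B) * prod ?w (crossing_subsets A B)"
      using A B by (intro prod.union_disjoint) (auto simp: crossing_subsets_def)
    finally show ?thesis .
  qed
  ultimately show ?thesis
    using A B weight_restr weight_eq_prod_subsets[OF \<Phi> _ \<omega>] by simp
qed

lemma card_crossing_subsets:
  assumes A: "finite A" and B: "finite B" and AB: "A \<inter> B = {}" and k: "k \<ge> 1"
  shows "card {S \<in> crossing_subsets A B. card S = k}
       = (card A + card B choose k) - (card A choose k) - (card B choose k)"
proof -
  let ?X = "{S. S \<subseteq> A \<union> B \<and> card S = k}"
  let ?Y = "{S. S \<subseteq> A \<and> card S = k}"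
  let ?Z = "{S. S \<subseteq> B \<and> card S = k}"
  have "{S \<in> crossing_subsets A B. card S = k} = ?X - ?Y - ?Z"
    by (auto simp: crossing_subsets_def)
  moreover have "?Y \<subseteq> ?X" by auto
  moreover have "?Z \<subseteq> ?X - ?Y"
  proof
    fix S assume S: "S \<in> ?Z"
    have "\<not> S \<subseteq> A"
    proof
      assume "S \<subseteq> A"
      with S AB have "S = {}" by blast
      with S k show False by simp
    qed
    with S show "S \<in> ?X - ?Y" by blast
  qed
  moreover have "finite ?X" using A B by simp
  ultimately have "card {S \<in> crossing_subsets A B. card S = k} = card ?X - card ?Y - card ?Z"
    by (simp add: card_Diff_subset finite_subset)
  then show ?thesis
    using A B AB by (simp add: n_subsets card_Un_disjoint)
qed

lemma prod_crossing_subsets_card: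
  fixes w :: "nat \<Rightarrow> real"
  assumes A: "finite A" and B: "finite B" and AB: "A \<inter> B = {}"
  shows "(\<Prod>S\<in>crossing_subsets A B. if card S \<le> d then w (card S) else 1)
       = (\<Prod>k\<in>{1..d}. w k ^ ((card A + card B choose k) - (card A choose k) - (card B choose k)))"
proof -
  let ?M = "crossing_subsets A B"
  have M: "finite ?M" using A B by (simp add: crossing_subsets_def)
  have "(\<Prod>S\<in>?M. if card S \<le> d then w (card S) else 1) = (\<Prod>S\<in>{S \<in> ?M. card S \<le> d}. w (card S))"
    by (rule prod.inter_filter[OF M, symmetric])
  also have "\<dots> = (\<Prod>k\<in>{1..d}. \<Prod>S\<in>{S \<in> {S \<in> ?M. card S \<le> d}. card S = k}. w (card S))"
  proof (rule prod.group[symmetric])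
    show "finite {S \<in> ?M. card S \<le> d}" using M by simp
    have "card S \<noteq> 0" if "S \<in> ?M" for S
      using that A B by (auto simp: crossing_subsets_def dest: finite_subset)
    then show "card ` {S \<in> ?M. card S \<le> d} \<subseteq> {1..d}" by force
  qed simp
  also have "\<dots> = (\<Prod>k\<in>{1..d}. w k ^ card {S \<in> ?M. card S = k})"
  proof (rule prod.cong[OF refl])
    fix k assume "k \<in> {1..d}"
    then have "{S \<in> {S \<in> ?M. card S \<le> d}. card S = k} = {S \<in> ?M. card S = k}" by auto
    then show "(\<Prod>S\<in>{S \<in> {S \<in> ?M. card S \<le> d}. card S = k}. w (card S)) = w k ^ card {S \<in> ?M. card S = k}"
      by simp
  qed
  finally show ?thesis
    using card_crossing_subsets[OF A B AB] by simp
qed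

lemma kweight_above_max_arity:
  assumes "finite \<Phi>" and "max_arity \<Phi> < k"
  shows "kweight \<Phi> k D \<nu> = 1"
proof -
  have "farity (fst p) \<le> max_arity \<Phi>" if "p \<in> \<Phi>" for p
    unfolding max_arity_def using assms(1) that by (intro Max_ge) auto
  then have "Phi_k \<Phi> k = {}" using assms(2) by (auto simp: Phi_k_def) (metis not_le)
  then show ?thesis by (simp add: kweight_def weight_def)
qed

lemma prod_crossing_subsets_kweight_bounds:
  assumes Rs: "finite Rs" and \<Phi>: "finite \<Phi>"
    and A: "finite A" and B: "finite B" and AB: "A \<inter> B = {}"
  shows "Mmin Rs ar \<Phi> (card A) (card B) \<le> (\<Prod>S\<in>crossing_subsets A B. kweight \<Phi> (card S) S (restr Rs ar \<omega> S))
    \<and> (\<Prod>S\<in>crossing_subsets A B. kweight \<Phi> (card S) S (restr Rs ar \<omega> S)) \<le> Mmax Rs ar \<Phi> (card A) (card B)"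
proof -
  let ?d = "max_arity \<Phi>"
  let ?w = "\<lambda>S. kweight \<Phi> (card S) S (restr Rs ar \<omega> S)"
  have factor_bounds: "(if card S \<le> ?d then wmin Rs ar \<Phi> (card S) else 1) \<le> ?w S
      \<and> ?w S \<le> (if card S \<le> ?d then wmax Rs ar \<Phi> (card S) else 1)"
    if "S \<in> crossing_subsets A B" for S
  proof (cases "card S \<le> ?d")
    case True
    have "finite S" using that A B by (auto simp: crossing_subsets_def dest: finite_subset)
    moreover have "restr Rs ar \<omega> S \<in> interps Rs ar S" by (simp add: interps_def restr_subset_ground_atoms)
    ultimately show ?thesis using True kweight_bounds[OF Rs] by simp
  next
    case False
    then show ?thesis using kweight_above_max_arity[OF \<Phi>] by simp
  qed
  have "Mmin Rs ar \<Phi> (card A) (card B) = (\<Prod>S\<in>crossing_subsets A B. if card S \<le> ?d then wmin Rs ar \<Phi> (card S) else 1)"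
    unfolding Mmin_def prod_crossing_subsets_card[OF A B AB] ..
  also have "\<dots> \<le> prod ?w (crossing_subsets A B)"
    using factor_bounds by (intro prod_mono) (simp add: less_imp_le[OF wmin_pos[OF Rs]])
  finally have "Mmin Rs ar \<Phi> (card A) (card B) \<le> prod ?w (crossing_subsets A B)" .
  moreover have "prod ?w (crossing_subsets A B) \<le> (\<Prod>S\<in>crossing_subsets A B. if card S \<le> ?d then wmax Rs ar \<Phi> (card S) else 1)"
    using factor_bounds by (intro prod_mono) (simp add: less_imp_le[OF kweight_pos])
  moreover have "\<dots> = Mmax Rs ar \<Phi> (card A) (card B)"
    unfolding Mmax_def prod_crossing_subsets_card[OF A B AB] ..
  ultimately show ?thesis by simp
qed

section \<open>Extensions of a pair of interpretations\<close>

definition extensions ::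
    "'r set \<Rightarrow> ('r \<Rightarrow> nat) \<Rightarrow> nat set \<Rightarrow> nat set \<Rightarrow> ('r \<times> nat list) set \<Rightarrow> ('r \<times> nat list) set
      \<Rightarrow> ('r \<times> nat list) set set" where
  "extensions Rs ar A B x y = {\<omega> \<in> interps Rs ar (A \<union> B). restr Rs ar \<omega> A = x \<and> restr Rs ar \<omega> B = y}"

lemma ground_atoms_disjoint:
  assumes "\<forall>R\<in>Rs. ar R \<ge> 1" and "A \<inter> B = {}"
  shows "ground_atoms Rs ar A \<inter> ground_atoms Rs ar B = {}"
proof -
  have "xs = []" if "set xs \<subseteq> A" "set xs \<subseteq> B" for xs :: "nat list"
  proof -
    have "set xs \<subseteq> A \<inter> B" using that by simp
    then show ?thesis using assms(2) by simp
  qed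
  then show ?thesis
    using assms(1) by (fastforce simp: ground_atoms_def)
qed

lemma card_extensions:
  assumes arity: "\<forall>R\<in>Rs. ar R \<ge> 1" and AB: "A \<inter> B = {}"
    and x: "x \<in> interps Rs ar A" and y: "y \<in> interps Rs ar B"
  shows "card (extensions Rs ar A B x y) = card (extensions Rs ar A B {} {})"
proof (rule bij_betw_same_card[of "\<lambda>\<omega>. \<omega> - ground_atoms Rs ar A - ground_atoms Rs ar B"],
       rule bij_betw_byWitness[where f' = "\<lambda>\<omega>. \<omega> \<union> x \<union> y"])
  have disj: "ground_atoms Rs ar A \<inter> ground_atoms Rs ar B = {}"
    by (rule ground_atoms_disjoint[OF arity AB])
  have sub: "ground_atoms Rs ar A \<subseteq> ground_atoms Rs ar (A \<union> B)"
    "ground_atoms Rs ar B \<subseteq> ground_atoms Rs ar (A \<union> B)"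
    by (auto simp: ground_atoms_def)
  have xy: "x \<subseteq> ground_atoms Rs ar A" "y \<subseteq> ground_atoms Rs ar B"
    using x y by (auto simp: interps_def)
  show "\<forall>\<omega>\<in>extensions Rs ar A B x y. \<omega> - ground_atoms Rs ar A - ground_atoms Rs ar B \<union> x \<union> y = \<omega>"
    by (auto simp: extensions_def restr_def)
  show "\<forall>\<omega>\<in>extensions Rs ar A B {} {}. \<omega> \<union> x \<union> y - ground_atoms Rs ar A - ground_atoms Rs ar B = \<omega>"
    using xy by (auto simp: extensions_def restr_def)
  show "(\<lambda>\<omega>. \<omega> - ground_atoms Rs ar A - ground_atoms Rs ar B) ` extensions Rs ar A B x y
      \<subseteq> extensions Rs ar A B {} {}"
    by (auto simp: extensions_def restr_def interps_def)
  show "(\<lambda>\<omega>. \<omega> \<union> x \<union> y) ` extensions Rs ar A B {} {} \<subseteq> extensions Rs ar A B x y"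
    using disj sub xy by (auto simp: extensions_def restr_def interps_def)
qed

lemma sum_interps_restr_mult:
  fixes f g :: "('r \<times> nat list) set \<Rightarrow> real"
  assumes Rs: "finite Rs" and arity: "\<forall>R\<in>Rs. ar R \<ge> 1"
    and A: "finite A" and B: "finite B" and AB: "A \<inter> B = {}"
  shows "(\<Sum>\<omega>\<in>interps Rs ar (A \<union> B). f (restr Rs ar \<omega> A) * g (restr Rs ar \<omega> B))
       = real (card (extensions Rs ar A B {} {})) * (\<Sum>x\<in>interps Rs ar A. f x) * (\<Sum>y\<in>interps Rs ar B. g y)"
proof -
  let ?c = "real (card (extensions Rs ar A B {} {}))"
  let ?r = "\<lambda>\<omega>. (restr Rs ar \<omega> A, restr Rs ar \<omega> B)"
  let ?F = "\<lambda>(x, y). f x * g y"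
  have "?r ` interps Rs ar (A \<union> B) \<subseteq> interps Rs ar A \<times> interps Rs ar B"
    by (auto simp: interps_def restr_def)
  then have "(\<Sum>\<omega>\<in>interps Rs ar (A \<union> B). ?F (?r \<omega>))
      = (\<Sum>p\<in>interps Rs ar A \<times> interps Rs ar B. \<Sum>\<omega>\<in>{\<omega> \<in> interps Rs ar (A \<union> B). ?r \<omega> = p}. ?F (?r \<omega>))"
    using Rs A B by (intro sum.group[symmetric]) (simp_all add: finite_interps)
  also have "\<dots> = (\<Sum>p\<in>interps Rs ar A \<times> interps Rs ar B. ?c * ?F p)"
  proof (rule sum.cong[OF refl])
    fix p assume "p \<in> interps Rs ar A \<times> interps Rs ar B"
    then obtain x y where p: "p = (x, y)" "x \<in> interps Rs ar A" "y \<in> interps Rs ar B" by blast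
    have "(\<Sum>\<omega>\<in>{\<omega> \<in> interps Rs ar (A \<union> B). ?r \<omega> = p}. ?F (?r \<omega>))
        = (\<Sum>\<omega>\<in>extensions Rs ar A B x y. ?F p)"
      by (rule sum.cong) (auto simp: extensions_def p(1))
    then show "(\<Sum>\<omega>\<in>{\<omega> \<in> interps Rs ar (A \<union> B). ?r \<omega> = p}. ?F (?r \<omega>)) = ?c * ?F p"
      using card_extensions[OF arity AB p(2,3)] by simp
  qed
  also have "\<dots> = ?c * (\<Sum>p\<in>interps Rs ar A \<times> interps Rs ar B. ?F p)"
    by (rule sum_distrib_left[symmetric])
  also have "(\<Sum>p\<in>interps Rs ar A \<times> interps Rs ar B. ?F p)
      = (\<Sum>x\<in>interps Rs ar A. f x) * (\<Sum>y\<in>interps Rs ar B. g y)"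
    by (simp add: sum_product sum.cartesian_product)
  finally show ?thesis by simp
qed

section \<open>The partition function of a disjoint union\<close>

lemma partition_fun_Un_disjoint_bounds:
  assumes Rs: "finite Rs" and arity: "\<forall>R\<in>Rs. ar R \<ge> 1"
    and \<Phi>: "finite \<Phi>" and farity: "\<forall>p\<in>\<Phi>. farity (fst p) \<ge> 1"
    and A: "finite A" and B: "finite B" and AB: "A \<inter> B = {}"
  defines "c \<equiv> real (card (extensions Rs ar A B {} {}))"
  shows "Mmin Rs ar \<Phi> (card A) (card B) * c * partition_fun Rs ar \<Phi> A * partition_fun Rs ar \<Phi> B
           \<le> partition_fun Rs ar \<Phi> (A \<union> B)
       \<and> partition_fun Rs ar \<Phi> (A \<union> B)
           \<le> partition_fun Rs ar \<Phi> A * partition_fun Rs ar \<Phi> B * c * Mmax Rs ar \<Phi> (card A) (card B)"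
proof -
  let ?I = "interps Rs ar (A \<union> B)"
  let ?u = "\<lambda>\<omega>. weight \<Phi> A (restr Rs ar \<omega> A) * weight \<Phi> B (restr Rs ar \<omega> B)"
  let ?P = "\<lambda>\<omega>. \<Prod>S\<in>crossing_subsets A B. kweight \<Phi> (card S) S (restr Rs ar \<omega> S)"
  have Z: "partition_fun Rs ar \<Phi> (A \<union> B) = (\<Sum>\<omega>\<in>?I. ?u \<omega> * ?P \<omega>)"
    unfolding partition_fun_def
    by (rule sum.cong[OF refl]) (simp add: weight_Un_disjoint[OF \<Phi> farity A B AB] interps_def)
  have sum_u: "(\<Sum>\<omega>\<in>?I. ?u \<omega>) = c * partition_fun Rs ar \<Phi> A * partition_fun Rs ar \<Phi> B"
    unfolding c_def partition_fun_def by (rule sum_interps_restr_mult[OF Rs arity A B AB])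
  have u_nonneg: "0 \<le> ?u \<omega>" for \<omega>
    by (simp add: weight_def)
  have "?u \<omega> * Mmin Rs ar \<Phi> (card A) (card B) \<le> ?u \<omega> * ?P \<omega>"
    and "?u \<omega> * ?P \<omega> \<le> ?u \<omega> * Mmax Rs ar \<Phi> (card A) (card B)" for \<omega>
    using prod_crossing_subsets_kweight_bounds[OF Rs \<Phi> A B AB, of ar \<omega>] u_nonneg[of \<omega>]
    by (simp_all add: mult_left_mono)
  then have "(\<Sum>\<omega>\<in>?I. ?u \<omega>) * Mmin Rs ar \<Phi> (card A) (card B) \<le> (\<Sum>\<omega>\<in>?I. ?u \<omega> * ?P \<omega>)"
    and "(\<Sum>\<omega>\<in>?I. ?u \<omega> * ?P \<omega>) \<le> (\<Sum>\<omega>\<in>?I. ?u \<omega>) * Mmax Rs ar \<Phi> (card A) (card B)"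
    unfolding sum_distrib_right by (simp_all add: sum_mono)
  then show ?thesis
    unfolding Z sum_u by (simp add: mult_ac)
qed

theorem proposition3:
  fixes Rs :: "'r set" and ar :: "'r \<Rightarrow> nat" and \<Phi> :: "('r fo \<times> real) set" and n m :: nat
  assumes "finite Rs"
    and "\<forall>R\<in>Rs. ar R \<ge> 1"
    and "finite \<Phi>"
    and "\<forall>p\<in>\<Phi>. wf_fo Rs ar (fst p)"
    and "\<forall>p\<in>\<Phi>. farity (fst p) \<ge> 1"
    and "n \<ge> 1" and "m \<ge> 1"
  shows "Mmin Rs ar \<Phi> n m * real (Cnm Rs ar n m) * Zpart Rs ar \<Phi> n * Zpart Rs ar \<Phi> m
           \<le> Zpart Rs ar \<Phi> (n + m)
       \<and> Zpart Rs ar \<Phi> (n + m)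
           \<le> Zpart Rs ar \<Phi> n * Zpart Rs ar \<Phi> m * real (Cnm Rs ar n m) * Mmax Rs ar \<Phi> n m"
proof -
  let ?A = "{1..n}" and ?B = "{n+1..n+m}"
  have AB: "?A \<union> ?B = {1..n+m}" "?A \<inter> ?B = {}" by auto
  have B: "?B = (+) n ` {1..m}" by (simp add: add.commute)
  have "Zpart Rs ar \<Phi> N = partition_fun Rs ar \<Phi> {1..N}" for N
    by (simp add: Zpart_def partition_fun_def)
  moreover have "partition_fun Rs ar \<Phi> ?B = partition_fun Rs ar \<Phi> {1..m}"
    unfolding B by (rule partition_fun_rename) simp
  moreover have "Cnm Rs ar n m = card (extensions Rs ar ?A ?B {} {})"
    unfolding Cnm_def extensions_def AB(1) ..
  ultimately show ?thesis
    using partition_fun_Un_disjoint_bounds[OF assms(1,2,3,5) _ _ AB(2)] AB(1) by simp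
qed

end
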